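(* Let $\{\mathcal G,(\Gamma_0,\Gamma_1),(\widetilde\Gamma_0,\widetilde\Gamma_1)\}$ be a triple for the adjoint pair $\{S,\widetilde S\}$ such that $\rho(A_0)$ and $\rho(\widetilde A_0)$ are nonempty, and let $M,\widetilde M$ be the associated Weyl functions. Let $B_1,B_2,\widetilde B_1,\widetilde B_2$ be linear operators in $\mathcal G$. Then for all $\lambda\in\rho(A_0)$ and $\mu\in\rho(\widetilde A_0)$: (i) $\lambda\in\sigma_p(A_{B_1B_2})$ if and only if $\ker(I-B_2M(\lambda)B_1)\neq\{0\}$, and in this case $\ker(A_{B_1B_2}-\lambda)=\{f_\lambda\in\ker(T-\lambda):\Gamma_0f_\lambda=B_1\varphi \text{ for some }\varphi\in\ker(I-B_2M(\lambda)B_1)\}$; (ii) $\mu\in\sigma_p(\widetilde A_{\widetilde B_1\widetilde B_2})$ if and only if $\ker(I-\widetilde B_2\widetilde M(\mu)\widetilde B_1)\neq\{0\}$, and in this case $\ker(\widetilde A_{\widetilde B_1\widetilde B_2}-\mu)=\{g_\mu\in\ker(\widetilde T-\mu):\widetilde\Gamma_0g_\mu=\widetilde B_1\psi\text{ for some }\psi\in\ker(I-\widetilde B_2\widetilde M(\mu)\widetilde B_1)\}$.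
   Context: Let $\mathfrak H$ be a separable Hilbert space. An adjoint pair $\{S,\widetilde S\}$ consists of densely defined closed operators $S,\widetilde S$ in $\mathfrak H$ with $(Sf,g)=(f,\widetilde Sg)$ for all $f\in\operatorname{dom}S$, $g\in\operatorname{dom}\widetilde S$. Fix operators $T\subset S^*$ and $\widetilde T\subset\widetilde S^*$ which are cores, i.e. $\overline T=S^*$ and $\overline{\widetilde T}=\widetilde S^*$. A triple $\{\mathcal G,(\Gamma_0,\Gamma_1),(\widetilde\Gamma_0,\widetilde\Gamma_1)\}$ for $\{S,\widetilde S\}$ consists of a Hilbert space $\mathcal G$ and linear maps $\Gamma_0,\Gamma_1:\operatorname{dom}T\to\mathcal G$, $\widetilde\Gamma_0,\widetilde\Gamma_1:\operatorname{dom}\widetilde T\to\mathcal G$. Put $A_0:=T\upharpoonright\ker\Gamma_0$ and $\widetilde A_0:=\widetilde T\upharpoonright\ker\widetilde\Gamma_0$. For $\lambda\in\rho(A_0)$ one has $\operatorname{dom}T=\ker\Gamma_0\dotplus\ker(T-\lambda)$, so $\Gamma_0\upharpoonright\ker(T-\lambda)$ is injective; similarly for $\widetilde T$. The $\gamma$-fields are $\gamma(\lambda):=(\Gamma_0\upharpoonright\ker(T-\lambda))^{-1}$, $\widetilde\gamma(\mu):=(\widetilde\Gamma_0\upharpoonright\ker(\widetilde T-\mu))^{-1}$; the Weyl functions are $M(\lambda):=\Gamma_1\gamma(\lambda)$, $\lambda\in\rho(A_0)$, and $\widetilde M(\mu):=\widetilde\Gamma_1\widetilde\gamma(\mu)$,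 $\mu\in\rho(\widetilde A_0)$. Products of (possibly unbounded, non-densely defined) operators have their natural domains, e.g. $\operatorname{dom}(B_1B_2)=\{\varphi\in\operatorname{dom}B_2:B_2\varphi\in\operatorname{dom}B_1\}$. Define $A_{B_1B_2}f:=Tf$ on $\operatorname{dom}A_{B_1B_2}:=\{f\in\operatorname{dom}T:\Gamma_1f\in\operatorname{dom}(B_1B_2),\ B_1B_2\Gamma_1f=\Gamma_0f\}$ and $\widetilde A_{\widetilde B_1\widetilde B_2}g:=\widetilde Tg$ on $\operatorname{dom}\widetilde A_{\widetilde B_1\widetilde B_2}:=\{g\in\operatorname{dom}\widetilde T:\widetilde\Gamma_1g\in\operatorname{dom}(\widetilde B_1\widetilde B_2),\ \widetilde B_1\widetilde B_2\widetilde\Gamma_1g=\widetilde\Gamma_0g\}$. $\sigma_p$ denotes the set of eigenvalues. *)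

theory Defs
  imports Complex_Main "HOL-Library.Countable_Set"
begin

text \<open>Complex vector spaces / Hilbert spaces are given explicitly by a scalar
multiplication sc :: complex => 'a => 'a and an inner product ip :: 'a => 'a => complex
(linear in the first argument, conjugate linear in the second).\<close>

definition is_subspace :: "(complex \<Rightarrow> 'a \<Rightarrow> 'a) \<Rightarrow> ('a::ab_group_add) set \<Rightarrow> bool" where
  "is_subspace sc D \<longleftrightarrow> 0 \<in> D \<and> (\<forall>x\<in>D. \<forall>y\<in>D. x + y \<in> D) \<and> (\<forall>c. \<forall>x\<in>D. sc c x \<in> D)"

definition linear_on :: "(complex \<Rightarrow> 'a \<Rightarrow> 'a) \<Rightarrow> (complex \<Rightarrow> 'b \<Rightarrow> 'b) \<Rightarrow> ('a::ab_group_add) set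
    \<Rightarrow> ('a \<Rightarrow> 'b::ab_group_add) \<Rightarrow> bool" where
  "linear_on sc1 sc2 D f \<longleftrightarrow> is_subspace sc1 D \<and> (\<forall>x\<in>D. \<forall>y\<in>D. f (x + y) = f x + f y)
     \<and> (\<forall>c. \<forall>x\<in>D. f (sc1 c x) = sc2 c (f x))"

type_synonym ('a, 'b) lop = "'a set \<times> ('a \<Rightarrow> 'b)"

definition lin_op :: "(complex \<Rightarrow> 'a \<Rightarrow> 'a) \<Rightarrow> (complex \<Rightarrow> 'b \<Rightarrow> 'b) \<Rightarrow> ('a::ab_group_add, 'b::ab_group_add) lop \<Rightarrow> bool" where
  "lin_op sc1 sc2 A \<longleftrightarrow> linear_on sc1 sc2 (fst A) (snd A)"

definition complex_inner_space :: "(complex \<Rightarrow> 'a \<Rightarrow> 'a) \<Rightarrow> ('a::ab_group_add \<Rightarrow> 'a \<Rightarrow> complex) \<Rightarrow> bool" where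
  "complex_inner_space sc ip \<longleftrightarrow> vector_space sc
     \<and> (\<forall>x y. ip x y = cnj (ip y x))
     \<and> (\<forall>x y z. ip (x + y) z = ip x z + ip y z)
     \<and> (\<forall>c x y. ip (sc c x) y = c * ip x y)
     \<and> (\<forall>x. 0 \<le> Re (ip x x))
     \<and> (\<forall>x. ip x x = 0 \<longrightarrow> x = 0)"

definition hnorm :: "('a::ab_group_add \<Rightarrow> 'a \<Rightarrow> complex) \<Rightarrow> 'a \<Rightarrow> real" where
  "hnorm ip x = sqrt (Re (ip x x))"

definition hconv :: "('a::ab_group_add \<Rightarrow> 'a \<Rightarrow> complex) \<Rightarrow> (nat \<Rightarrow> 'a) \<Rightarrow> 'a \<Rightarrow> bool" where
  "hconv ip X x \<longleftrightarrow> (\<lambda>n. hnorm ip (X n - x)) \<longlonglongrightarrow> 0"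

definition hilbert_space :: "(complex \<Rightarrow> 'a \<Rightarrow> 'a) \<Rightarrow> ('a::ab_group_add \<Rightarrow> 'a \<Rightarrow> complex) \<Rightarrow> bool" where
  "hilbert_space sc ip \<longleftrightarrow> complex_inner_space sc ip
     \<and> (\<forall>X. (\<forall>e>0. \<exists>N. \<forall>m\<ge>N. \<forall>n\<ge>N. hnorm ip (X m - X n) < e) \<longrightarrow> (\<exists>x. hconv ip X x))"

definition separable :: "('a::ab_group_add \<Rightarrow> 'a \<Rightarrow> complex) \<Rightarrow> bool" where
  "separable ip \<longleftrightarrow> (\<exists>D. countable D \<and> (\<forall>x. \<forall>e>0. \<exists>d\<in>D. hnorm ip (x - d) < e))"

definition densely_defined :: "('a::ab_group_add \<Rightarrow> 'a \<Rightarrow> complex) \<Rightarrow> ('a, 'b) lop \<Rightarrow> bool" where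
  "densely_defined ip A \<longleftrightarrow> (\<forall>x. \<forall>e>0. \<exists>d\<in>fst A. hnorm ip (x - d) < e)"

definition graph :: "('a, 'b) lop \<Rightarrow> ('a \<times> 'b) set" where
  "graph A = {(x, snd A x) | x. x \<in> fst A}"

definition closed_op :: "('a::ab_group_add \<Rightarrow> 'a \<Rightarrow> complex) \<Rightarrow> ('a, 'a) lop \<Rightarrow> bool" where
  "closed_op ip A \<longleftrightarrow> (\<forall>X x y. (\<forall>n. X n \<in> fst A) \<and> hconv ip X x \<and> hconv ip (\<lambda>n. snd A (X n)) y
       \<longrightarrow> x \<in> fst A \<and> snd A x = y)"

definition adjoint_graph :: "('a::ab_group_add \<Rightarrow> 'a \<Rightarrow> complex) \<Rightarrow> ('a, 'a) lop \<Rightarrow> ('a \<times> 'a) set" where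
  "adjoint_graph ip S = {(g, h). \<forall>f\<in>fst S. ip (snd S f) g = ip f h}"

definition graph_closure :: "('a::ab_group_add \<Rightarrow> 'a \<Rightarrow> complex) \<Rightarrow> ('a \<times> 'a) set \<Rightarrow> ('a \<times> 'a) set" where
  "graph_closure ip G = {(x, y). \<exists>X Y. (\<forall>n. (X n, Y n) \<in> G) \<and> hconv ip X x \<and> hconv ip Y y}"

definition adjoint_pair :: "(complex \<Rightarrow> 'a \<Rightarrow> 'a) \<Rightarrow> ('a::ab_group_add \<Rightarrow> 'a \<Rightarrow> complex)
    \<Rightarrow> ('a, 'a) lop \<Rightarrow> ('a, 'a) lop \<Rightarrow> bool" where
  "adjoint_pair sc ip S St \<longleftrightarrow> lin_op sc sc S \<and> lin_op sc sc St
     \<and> densely_defined ip S \<and> densely_defined ip St \<and> closed_op ip S \<and> closed_op ip St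
     \<and> (\<forall>f\<in>fst S. \<forall>g\<in>fst St. ip (snd S f) g = ip f (snd St g))"

definition core_of_adjoint :: "('a::ab_group_add \<Rightarrow> 'a \<Rightarrow> complex) \<Rightarrow> ('a, 'a) lop \<Rightarrow> ('a, 'a) lop \<Rightarrow> bool" where
  "core_of_adjoint ip T S \<longleftrightarrow> graph T \<subseteq> adjoint_graph ip S
     \<and> graph_closure ip (graph T) = adjoint_graph ip S"

definition restrict_op :: "('a, 'b) lop \<Rightarrow> 'a set \<Rightarrow> ('a, 'b) lop" where
  "restrict_op A D = (fst A \<inter> D, snd A)"

definition ker_shift :: "(complex \<Rightarrow> 'a \<Rightarrow> 'a) \<Rightarrow> ('a::ab_group_add, 'a) lop \<Rightarrow> complex \<Rightarrow> 'a set" where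
  "ker_shift sc A lam = {x \<in> fst A. snd A x - sc lam x = 0}"

definition point_spectrum :: "(complex \<Rightarrow> 'a \<Rightarrow> 'a) \<Rightarrow> ('a::ab_group_add, 'a) lop \<Rightarrow> complex set" where
  "point_spectrum sc A = {lam. \<exists>x\<in>fst A. x \<noteq> 0 \<and> snd A x = sc lam x}"

definition resolvent_set :: "(complex \<Rightarrow> 'a \<Rightarrow> 'a) \<Rightarrow> ('a::ab_group_add \<Rightarrow> 'a \<Rightarrow> complex)
    \<Rightarrow> ('a, 'a) lop \<Rightarrow> complex set" where
  "resolvent_set sc ip A = {lam. bij_betw (\<lambda>x. snd A x - sc lam x) (fst A) UNIV
      \<and> (\<exists>C. \<forall>x\<in>fst A. hnorm ip x \<le> C * hnorm ip (snd A x - sc lam x))}"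

definition gamma_field :: "(complex \<Rightarrow> 'a \<Rightarrow> 'a) \<Rightarrow> ('a::ab_group_add, 'a) lop \<Rightarrow> ('a \<Rightarrow> 'b)
    \<Rightarrow> complex \<Rightarrow> ('b, 'a) lop" where
  "gamma_field sc T G0 lam = (G0 ` ker_shift sc T lam, \<lambda>\<phi>. THE f. f \<in> ker_shift sc T lam \<and> G0 f = \<phi>)"

definition weyl_function :: "(complex \<Rightarrow> 'a \<Rightarrow> 'a) \<Rightarrow> ('a::ab_group_add, 'a) lop \<Rightarrow> ('a \<Rightarrow> 'b)
    \<Rightarrow> ('a \<Rightarrow> 'b) \<Rightarrow> complex \<Rightarrow> ('b, 'b) lop" where
  "weyl_function sc T G0 G1 lam = (fst (gamma_field sc T G0 lam), \<lambda>\<phi>. G1 (snd (gamma_field sc T G0 lam) \<phi>))"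

definition op_comp :: "('b, 'c) lop \<Rightarrow> ('a, 'b) lop \<Rightarrow> ('a, 'c) lop" where
  "op_comp B1 B2 = ({\<phi> \<in> fst B2. snd B2 \<phi> \<in> fst B1}, \<lambda>\<phi>. snd B1 (snd B2 \<phi>))"

definition ker_I_minus :: "('b::ab_group_add, 'b) lop \<Rightarrow> 'b set" where
  "ker_I_minus K = {\<phi> \<in> fst K. \<phi> - snd K \<phi> = 0}"

definition bc_ext :: "('a, 'a) lop \<Rightarrow> ('a \<Rightarrow> 'b) \<Rightarrow> ('a \<Rightarrow> 'b) \<Rightarrow> ('b, 'b) lop \<Rightarrow> ('b, 'b) lop \<Rightarrow> ('a, 'a) lop" where
  "bc_ext T G0 G1 B1 B2 =
     ({f \<in> fst T. G1 f \<in> fst (op_comp B1 B2) \<and> snd (op_comp B1 B2) (G1 f) = G0 f}, snd T)"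

end

theory Submission
  imports Defs
begin

text \<open>For \<open>\<lambda> \<in> \<rho>(A\<^sub>0)\<close> no nonzero vector of \<open>ker (T - \<lambda>)\<close> lies in \<open>ker \<Gamma>\<^sub>0\<close>, so
  \<open>\<Gamma>\<^sub>0\<close> is injective on \<open>ker (T - \<lambda>)\<close> and \<open>\<gamma>(\<lambda>)\<close> inverts it there. An eigenvector \<open>f\<close> of
  \<open>A\<^sub>B\<^sub>1\<^sub>B\<^sub>2\<close> gives the fixed point \<open>\<phi> = B\<^sub>2\<Gamma>\<^sub>1f\<close> of \<open>B\<^sub>2M(\<lambda>)B\<^sub>1\<close>, because
  \<open>\<gamma>(\<lambda>)B\<^sub>1\<phi> = \<gamma>(\<lambda>)\<Gamma>\<^sub>0f = f\<close>; conversely a fixed point \<open>\<phi>\<close> gives the eigenvector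
  \<open>\<gamma>(\<lambda>)B\<^sub>1\<phi>\<close>. Both correspondences preserve being nonzero by linearity and the
  injectivity of \<open>\<Gamma>\<^sub>0\<close> on \<open>ker (T - \<lambda>)\<close>; no topology is involved.\<close>

lemma additive_on_zero:
  fixes D :: "'a::ab_group_add set"
  assumes "\<forall>x\<in>D. \<forall>y\<in>D. f (x + y) = f x + f y" and "0 \<in> D"
  shows "f 0 = (0 :: 'b::ab_group_add)"
proof -
  have "f (0 + 0) = f 0 + f 0" using assms by blast
  then show ?thesis by simp
qed

lemma linear_on_zero:
  assumes "linear_on sc1 sc2 D f"
  shows "0 \<in> D" and "f 0 = 0"
  using assms additive_on_zero[of D f] unfolding linear_on_def is_subspace_def by auto

lemma lin_op_zero:
  assumes "lin_op sc1 sc2 A"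
  shows "0 \<in> fst A" and "snd A 0 = 0"
  using assms linear_on_zero unfolding lin_op_def by auto

lemma linear_on_diff:
  assumes "vector_space sc1" and f: "linear_on sc1 sc2 D f" and "x \<in> D" and "y \<in> D"
  shows "x - y \<in> D" and "f (x - y) = f x - f y"
proof -
  interpret vector_space sc1 by (rule assms(1))
  have "sc1 (-1) y \<in> D" using f \<open>y \<in> D\<close> unfolding linear_on_def is_subspace_def by blast
  then have minus_y: "- y \<in> D" by simp
  then show "x - y \<in> D" using f \<open>x \<in> D\<close> unfolding linear_on_def is_subspace_def by auto
  have "f (y + - y) = f y + f (- y)" using f \<open>y \<in> D\<close> minus_y unfolding linear_on_def by blast
  then have "f (- y) = - f y" using linear_on_zero(2)[OF f] by (simp add: minus_unique)
  moreover have "f (x + - y) = f x + f (- y)" using f \<open>x \<in> D\<close> minus_y unfolding linear_on_def by blast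
  ultimately show "f (x - y) = f x - f y" by simp
qed

lemma zero_in_ker_shift:
  assumes "vector_space sc" and "lin_op sc sc T"
  shows "0 \<in> ker_shift sc T lam"
proof -
  interpret vector_space sc by (rule assms(1))
  show ?thesis using lin_op_zero[OF assms(2)] unfolding ker_shift_def by simp
qed

lemma point_spectrum_iff_ker_shift:
  "lam \<in> point_spectrum sc A \<longleftrightarrow> (\<exists>f \<in> ker_shift sc A lam. f \<noteq> 0)"
  unfolding point_spectrum_def ker_shift_def by auto

lemma inj_on_boundary_map_ker_shift:
  assumes "vector_space sc" and T: "lin_op sc sc T" and G0: "linear_on sc sc2 (fst T) G0"
    and lam: "lam \<in> resolvent_set sc ip (restrict_op T {f. G0 f = 0})"
  shows "inj_on G0 (ker_shift sc T lam)"
proof (rule inj_onI)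
  interpret vector_space sc by (rule assms(1))
  have T_lin: "linear_on sc sc (fst T) (snd T)" using T unfolding lin_op_def .
  have inj_A0: "inj_on (\<lambda>x. snd T x - sc lam x) (fst T \<inter> {f. G0 f = 0})"
    using lam unfolding resolvent_set_def restrict_op_def bij_betw_def by auto
  fix f g
  assume f: "f \<in> ker_shift sc T lam" and g: "g \<in> ker_shift sc T lam" and "G0 f = G0 g"
  then have fT: "f \<in> fst T" and gT: "g \<in> fst T" unfolding ker_shift_def by auto
  have "f - g \<in> fst T \<inter> {f. G0 f = 0}"
    using linear_on_diff[OF assms(1) G0 fT gT] \<open>G0 f = G0 g\<close> by simp
  moreover have "0 \<in> fst T \<inter> {f. G0 f = 0}" using linear_on_zero[OF G0] by simp
  moreover have "snd T (f - g) - sc lam (f - g) = snd T 0 - sc lam 0"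
    using f g linear_on_diff(2)[OF assms(1) T_lin fT gT] lin_op_zero(2)[OF T]
    unfolding ker_shift_def by (simp add: scale_right_diff_distrib algebra_simps)
  ultimately have "f - g = 0" using inj_A0 unfolding inj_on_def by blast
  then show "f = g" by simp
qed

lemma gamma_field_boundary_map:
  assumes "inj_on G0 (ker_shift sc T lam)" and "f \<in> ker_shift sc T lam"
  shows "snd (gamma_field sc T G0 lam) (G0 f) = f"
  unfolding gamma_field_def snd_conv
  by (rule the_equality) (use assms in \<open>auto dest: inj_onD\<close>)

lemma ker_I_minus_weyl_iff:
  assumes "inj_on G0 (ker_shift sc T lam)"
  shows "\<phi> \<in> ker_I_minus (op_comp B2 (op_comp (weyl_function sc T G0 G1 lam) B1)) \<longleftrightarrow>
    (\<exists>f \<in> ker_shift sc T lam. \<phi> \<in> fst B1 \<and> snd B1 \<phi> = G0 f \<and> G1 f \<in> fst B2 \<and> snd B2 (G1 f) = \<phi>)"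
  (is "\<phi> \<in> ker_I_minus ?K \<longleftrightarrow> _")
proof
  assume "\<phi> \<in> ker_I_minus ?K"
  then obtain f where f: "f \<in> ker_shift sc T lam" "\<phi> \<in> fst B1" "snd B1 \<phi> = G0 f"
    and "G1 (snd (gamma_field sc T G0 lam) (G0 f)) \<in> fst B2"
    and "\<phi> = snd B2 (G1 (snd (gamma_field sc T G0 lam) (G0 f)))"
    unfolding ker_I_minus_def op_comp_def weyl_function_def by (auto simp: gamma_field_def)
  then show "\<exists>f \<in> ker_shift sc T lam. \<phi> \<in> fst B1 \<and> snd B1 \<phi> = G0 f \<and> G1 f \<in> fst B2 \<and> snd B2 (G1 f) = \<phi>"
    using gamma_field_boundary_map[OF assms f(1)] by auto
next
  assume "\<exists>f \<in> ker_shift sc T lam. \<phi> \<in> fst B1 \<and> snd B1 \<phi> = G0 f \<and> G1 f \<in> fst B2 \<and> snd B2 (G1 f) = \<phi>"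
  then obtain f where "f \<in> ker_shift sc T lam" "\<phi> \<in> fst B1" "snd B1 \<phi> = G0 f" "G1 f \<in> fst B2"
    "snd B2 (G1 f) = \<phi>" by blast
  then show "\<phi> \<in> ker_I_minus ?K"
    using gamma_field_boundary_map[OF assms]
    unfolding ker_I_minus_def op_comp_def weyl_function_def by (auto simp: gamma_field_def)
qed

lemma ker_shift_bc_ext:
  assumes "inj_on G0 (ker_shift sc T lam)"
  shows "ker_shift sc (bc_ext T G0 G1 B1 B2) lam =
    {f \<in> ker_shift sc T lam. \<exists>\<phi> \<in> ker_I_minus (op_comp B2 (op_comp (weyl_function sc T G0 G1 lam) B1)).
       G0 f = snd B1 \<phi>}"
  (is "?lhs = ?rhs")
proof (intro set_eqI iffI)
  let ?K = "op_comp B2 (op_comp (weyl_function sc T G0 G1 lam) B1)"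
  fix f assume "f \<in> ?lhs"
  then have f: "f \<in> ker_shift sc T lam" "G1 f \<in> fst B2" "snd B2 (G1 f) \<in> fst B1"
    "snd B1 (snd B2 (G1 f)) = G0 f"
    unfolding ker_shift_def bc_ext_def op_comp_def by auto
  then have "snd B2 (G1 f) \<in> ker_I_minus ?K"
    unfolding ker_I_minus_weyl_iff[OF assms] by blast
  then have "\<exists>\<phi> \<in> ker_I_minus ?K. G0 f = snd B1 \<phi>" using f(4) by metis
  with f(1) show "f \<in> ?rhs" by blast
next
  fix f assume "f \<in> ?rhs"
  then obtain \<phi> g where f: "f \<in> ker_shift sc T lam" "G0 f = snd B1 \<phi>"
    and g: "g \<in> ker_shift sc T lam" "\<phi> \<in> fst B1" "snd B1 \<phi> = G0 g" "G1 g \<in> fst B2"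
      "snd B2 (G1 g) = \<phi>"
    using ker_I_minus_weyl_iff[OF assms] by blast
  have "g = f" using inj_onD[OF assms _ g(1) f(1)] f(2) g(3) by simp
  then show "f \<in> ?lhs" using f g unfolding ker_shift_def bc_ext_def op_comp_def by auto
qed

lemma point_spectrum_bc_ext_iff:
  assumes vs: "vector_space sc" and inj: "inj_on G0 (ker_shift sc T lam)" and T: "lin_op sc sc T"
    and G0: "linear_on sc sc2 (fst T) G0" and G1: "linear_on sc sc2 (fst T) G1"
    and B1: "lin_op sc2 sc2 B1" and B2: "lin_op sc2 sc2 B2"
  shows "lam \<in> point_spectrum sc (bc_ext T G0 G1 B1 B2) \<longleftrightarrow>
    ker_I_minus (op_comp B2 (op_comp (weyl_function sc T G0 G1 lam) B1)) \<noteq> {0}"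
  (is "_ \<longleftrightarrow> ?K \<noteq> {0}")
proof
  assume "lam \<in> point_spectrum sc (bc_ext T G0 G1 B1 B2)"
  then obtain f \<phi> where f: "f \<in> ker_shift sc T lam" "f \<noteq> 0" and \<phi>: "\<phi> \<in> ?K" "G0 f = snd B1 \<phi>"
    unfolding point_spectrum_iff_ker_shift ker_shift_bc_ext[OF inj] by blast
  have "\<phi> \<noteq> 0"
  proof
    assume "\<phi> = 0"
    then have "G0 f = G0 0" using \<phi>(2) lin_op_zero[OF B1] linear_on_zero[OF G0] by simp
    then have "f = 0" using inj_onD[OF inj _ f(1) zero_in_ker_shift[OF vs T]] by simp
    then show False using f(2) by contradiction
  qed
  then show "?K \<noteq> {0}" using \<phi>(1) by blast
next
  assume "?K \<noteq> {0}"
  moreover have "0 \<in> ?K"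
    unfolding ker_I_minus_weyl_iff[OF inj] using zero_in_ker_shift[OF vs T] lin_op_zero[OF B1]
      lin_op_zero[OF B2] linear_on_zero[OF G0] linear_on_zero[OF G1] by auto
  ultimately obtain \<phi> where \<phi>: "\<phi> \<in> ?K" "\<phi> \<noteq> 0" by blast
  then obtain f where f: "f \<in> ker_shift sc T lam" "snd B1 \<phi> = G0 f" "snd B2 (G1 f) = \<phi>"
    using ker_I_minus_weyl_iff[OF inj] by blast
  have "f \<noteq> 0" using f \<phi>(2) lin_op_zero[OF B2] linear_on_zero[OF G1] by auto
  moreover have "f \<in> ker_shift sc (bc_ext T G0 G1 B1 B2) lam"
    unfolding ker_shift_bc_ext[OF inj] using f(1) f(2)[symmetric] \<phi>(1) by blast
  ultimately show "lam \<in> point_spectrum sc (bc_ext T G0 G1 B1 B2)"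
    unfolding point_spectrum_iff_ker_shift by blast
qed

lemma bc_ext_eigenvalue_characterization:
  assumes "vector_space sc" and T: "lin_op sc sc T"
    and G0: "linear_on sc sc2 (fst T) G0" and G1: "linear_on sc sc2 (fst T) G1"
    and B1: "lin_op sc2 sc2 B1" and B2: "lin_op sc2 sc2 B2"
    and lam: "lam \<in> resolvent_set sc ip (restrict_op T {f. G0 f = 0})"
  shows "(lam \<in> point_spectrum sc (bc_ext T G0 G1 B1 B2) \<longleftrightarrow>
            ker_I_minus (op_comp B2 (op_comp (weyl_function sc T G0 G1 lam) B1)) \<noteq> {0})
       \<and> (lam \<in> point_spectrum sc (bc_ext T G0 G1 B1 B2) \<longrightarrow>
            ker_shift sc (bc_ext T G0 G1 B1 B2) lam =
              {f \<in> ker_shift sc T lam. \<exists>\<phi> \<in> ker_I_minus (op_comp B2 (op_comp (weyl_function sc T G0 G1 lam) B1)).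
                 G0 f = snd B1 \<phi>})"
proof -
  have inj: "inj_on G0 (ker_shift sc T lam)"
    by (rule inj_on_boundary_map_ker_shift[OF assms(1) T G0 lam])
  show ?thesis
    by (intro conjI impI point_spectrum_bc_ext_iff[OF assms(1) inj T G0 G1 B1 B2] ker_shift_bc_ext[OF inj])
qed

theorem theorem4p2:
  fixes scH :: "complex \<Rightarrow> 'a::ab_group_add \<Rightarrow> 'a" and ipH :: "'a \<Rightarrow> 'a \<Rightarrow> complex"
    and scG :: "complex \<Rightarrow> 'b::ab_group_add \<Rightarrow> 'b" and ipG :: "'b \<Rightarrow> 'b \<Rightarrow> complex"
    and S St T Tt :: "('a, 'a) lop"
    and G0 G1 Gt0 Gt1 :: "'a \<Rightarrow> 'b"
    and B1 B2 Bt1 Bt2 :: "('b, 'b) lop"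
  assumes "hilbert_space scH ipH" and "separable ipH"
    and "hilbert_space scG ipG"
    and "adjoint_pair scH ipH S St"
    and "lin_op scH scH T" and "core_of_adjoint ipH T S"
    and "lin_op scH scH Tt" and "core_of_adjoint ipH Tt St"
    and "linear_on scH scG (fst T) G0" and "linear_on scH scG (fst T) G1"
    and "linear_on scH scG (fst Tt) Gt0" and "linear_on scH scG (fst Tt) Gt1"
    and "resolvent_set scH ipH (restrict_op T {f. G0 f = 0}) \<noteq> {}"
    and "resolvent_set scH ipH (restrict_op Tt {g. Gt0 g = 0}) \<noteq> {}"
    and "lin_op scG scG B1" and "lin_op scG scG B2"
    and "lin_op scG scG Bt1" and "lin_op scG scG Bt2"
  shows "(\<forall>lam\<in>resolvent_set scH ipH (restrict_op T {f. G0 f = 0}).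
            (lam \<in> point_spectrum scH (bc_ext T G0 G1 B1 B2) \<longleftrightarrow>
               ker_I_minus (op_comp B2 (op_comp (weyl_function scH T G0 G1 lam) B1)) \<noteq> {0})
          \<and> (lam \<in> point_spectrum scH (bc_ext T G0 G1 B1 B2) \<longrightarrow>
               ker_shift scH (bc_ext T G0 G1 B1 B2) lam =
                 {f \<in> ker_shift scH T lam. \<exists>\<phi> \<in> ker_I_minus (op_comp B2 (op_comp (weyl_function scH T G0 G1 lam) B1)).
                    G0 f = snd B1 \<phi>}))
       \<and> (\<forall>mu\<in>resolvent_set scH ipH (restrict_op Tt {g. Gt0 g = 0}).
            (mu \<in> point_spectrum scH (bc_ext Tt Gt0 Gt1 Bt1 Bt2) \<longleftrightarrow>
               ker_I_minus (op_comp Bt2 (op_comp (weyl_function scH Tt Gt0 Gt1 mu) Bt1)) \<noteq> {0})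
          \<and> (mu \<in> point_spectrum scH (bc_ext Tt Gt0 Gt1 Bt1 Bt2) \<longrightarrow>
               ker_shift scH (bc_ext Tt Gt0 Gt1 Bt1 Bt2) mu =
                 {g \<in> ker_shift scH Tt mu. \<exists>\<psi> \<in> ker_I_minus (op_comp Bt2 (op_comp (weyl_function scH Tt Gt0 Gt1 mu) Bt1)).
                    Gt0 g = snd Bt1 \<psi>}))"
proof -
  have vs: "vector_space scH"
    using assms(1) unfolding hilbert_space_def complex_inner_space_def by simp
  show ?thesis
    by (rule conjI; rule ballI; rule bc_ext_eigenvalue_characterization[OF vs assms(5,9,10,15,16)]
        bc_ext_eigenvalue_characterization[OF vs assms(7,11,12,17,18)]; assumption)
qed

end
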